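(* For every rewritable 1qfa $M$ with quantum advice $\Psi=\{|\phi_n\rangle\}_{n\in\mathbb N}$, there exist another rewritable 1qfa $N$ (with the same input alphabet and with state set, accepting set and advice-track alphabet of its own) and quantum advice $\Psi'=\{|\phi'_n\rangle\}_{n\in\mathbb N}$ for $N$ such that (i) $N$ performs a measurement only once, just after scanning the entire input, i.e., its acceptance probability on $x=x_1\cdots x_n$ is $\|P_{acc}U^{(n)}_{x_n}\cdots U^{(1)}_{x_1}|q_0\rangle|\phi'_n\rangle\|^2$ (with $U^{(i)}_\sigma$, $P_{acc}$, $q_0$ those of $N$), and (ii) for every input $x$ this acceptance probability of $N$ with $\Psi'$ equals the acceptance probability $p_{acc}(x,\phi_n)$ of $M$ with $\Psi$.
   Context: Rewritable 1qfa: finite state set $Q$ with $q_0\in Q$ and disjoint $Q_{acc},Q_{rej}\subseteq Q$ ($Q_{non}$ the rest), input alphabet $\Sigma$, finite advice-track alphabet $\Gamma$, and for each $\sigma\in\Sigma$, $i\ge1$ a unitary $V^{(i)}_\sigma$ on $\mathrm{span}\{|q\rangle:q\in Q\}\otimes\mathrm{span}\{|\tau\rangle:\tau\in\Gamma\}$. For $n\ge1$, on $E_n=\mathrm{span}\{|q\rangle|y\rangle:q\in Q,y\in\Gamma^n\}$ let $U^{(i)}_\sigma$ ($1\le i\le n$) act as $V^{(i)}_\sigma$ on the state register and the $i$-th advice symbol (which may be changed) and as identity on other advice symbols; the input track is read-only. $P_{acc},P_{rej},P_{non}$ are projections on the state register; $T^{(i)}_\sigma=P_{non}U^{(i)}_\sigma$.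 Quantum advice: unit vectors $|\phi_n\rangle\in\mathrm{span}\{|y\rangle:y\in\Gamma^n\}$. For $x=x_1\cdots x_n\in\Sigma^n$ ($n\ge1$), the (measure-many) acceptance probability is $p_{acc}(x,\phi_n)=\sum_{i=1}^n\|P_{acc}U^{(i)}_{x_i}T^{(i-1)}_{x_{i-1}}\cdots T^{(1)}_{x_1}|q_0\rangle|\phi_n\rangle\|^2$. *)

theory Defs
  imports Complex_Main
begin

text \<open>V \<sigma> i is a matrix on Q \<times> \<Gamma>, entry V \<sigma> i (out) (in).
  Vectors of E_n are functions 's \<times> 'g list \<Rightarrow> complex, of which only the values on
  Q \<times> \<Gamma>^n matter.\<close>

definition words :: "'g set \<Rightarrow> nat \<Rightarrow> 'g list set" where
  "words \<Gamma> n = {y. set y \<subseteq> \<Gamma> \<and> length y = n}"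

definition unitary_on :: "'b set \<Rightarrow> ('b \<Rightarrow> 'b \<Rightarrow> complex) \<Rightarrow> bool" where
  "unitary_on B W \<longleftrightarrow>
     (\<forall>a\<in>B. \<forall>b\<in>B. (\<Sum>k\<in>B. cnj (W k a) * W k b) = (if a = b then 1 else 0))"

definition is_rqfa ::
  "'a set \<Rightarrow> 's set \<Rightarrow> 's \<Rightarrow> 's set \<Rightarrow> 's set \<Rightarrow> 'g set
     \<Rightarrow> ('a \<Rightarrow> nat \<Rightarrow> ('s \<times> 'g) \<Rightarrow> ('s \<times> 'g) \<Rightarrow> complex) \<Rightarrow> bool" where
  "is_rqfa \<Sigma> Q q0 Qa Qr \<Gamma> V \<longleftrightarrow>
     finite \<Sigma> \<and> finite Q \<and> q0 \<in> Q \<and> Qa \<subseteq> Q \<and> Qr \<subseteq> Q \<and> Qa \<inter> Qr = {} \<and> finite \<Gamma> \<and>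
     (\<forall>\<sigma>\<in>\<Sigma>. \<forall>i\<ge>1. unitary_on (Q \<times> \<Gamma>) (V \<sigma> i))"

text \<open>U^(i): acts as W on the state register and the i-th advice symbol.\<close>
definition Uop :: "'s set \<Rightarrow> 'g set \<Rightarrow> ('s \<times> 'g \<Rightarrow> 's \<times> 'g \<Rightarrow> complex) \<Rightarrow> nat
     \<Rightarrow> ('s \<times> 'g list \<Rightarrow> complex) \<Rightarrow> ('s \<times> 'g list \<Rightarrow> complex)" where
  "Uop Q \<Gamma> W i \<psi> = (\<lambda>(q', y').
     if q' \<in> Q \<and> set y' \<subseteq> \<Gamma> \<and> 1 \<le> i \<and> i \<le> length y'
     then (\<Sum>(q, \<tau>)\<in>Q \<times> \<Gamma>. W (q', y' ! (i - 1)) (q, \<tau>) * \<psi> (q, y'[i - 1 := \<tau>]))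
     else 0)"

definition proj :: "'s set \<Rightarrow> ('s \<times> 'g list \<Rightarrow> complex) \<Rightarrow> ('s \<times> 'g list \<Rightarrow> complex)" where
  "proj S \<psi> = (\<lambda>(q, y). if q \<in> S then \<psi> (q, y) else 0)"

definition sqnorm :: "'s set \<Rightarrow> 'g set \<Rightarrow> nat \<Rightarrow> ('s \<times> 'g list \<Rightarrow> complex) \<Rightarrow> real" where
  "sqnorm Q \<Gamma> n \<psi> = (\<Sum>q\<in>Q. \<Sum>y\<in>words \<Gamma> n. (cmod (\<psi> (q, y)))^2)"

definition init :: "'s \<Rightarrow> ('g list \<Rightarrow> complex) \<Rightarrow> ('s \<times> 'g list \<Rightarrow> complex)" where
  "init q0 \<phi> = (\<lambda>(q, y). if q = q0 then \<phi> y else 0)"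

definition is_advice :: "'g set \<Rightarrow> (nat \<Rightarrow> 'g list \<Rightarrow> complex) \<Rightarrow> bool" where
  "is_advice \<Gamma> \<phi> \<longleftrightarrow> (\<forall>n\<ge>1. (\<Sum>y\<in>words \<Gamma> n. (cmod (\<phi> n y))^2) = 1)"

text \<open>runT ... x k \<psi> = T^(k)_{x_k} ... T^(1)_{x_1} \<psi>, with T = P_non U.\<close>
fun runT :: "'s set \<Rightarrow> 's set \<Rightarrow> 'g set \<Rightarrow> ('a \<Rightarrow> nat \<Rightarrow> ('s \<times> 'g) \<Rightarrow> ('s \<times> 'g) \<Rightarrow> complex)
     \<Rightarrow> 'a list \<Rightarrow> nat \<Rightarrow> ('s \<times> 'g list \<Rightarrow> complex) \<Rightarrow> ('s \<times> 'g list \<Rightarrow> complex)" where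
  "runT Q Qn \<Gamma> V x 0 \<psi> = \<psi>"
| "runT Q Qn \<Gamma> V x (Suc k) \<psi> =
     proj Qn (Uop Q \<Gamma> (V (x ! k) (Suc k)) (Suc k) (runT Q Qn \<Gamma> V x k \<psi>))"

fun runU :: "'s set \<Rightarrow> 'g set \<Rightarrow> ('a \<Rightarrow> nat \<Rightarrow> ('s \<times> 'g) \<Rightarrow> ('s \<times> 'g) \<Rightarrow> complex)
     \<Rightarrow> 'a list \<Rightarrow> nat \<Rightarrow> ('s \<times> 'g list \<Rightarrow> complex) \<Rightarrow> ('s \<times> 'g list \<Rightarrow> complex)" where
  "runU Q \<Gamma> V x 0 \<psi> = \<psi>"
| "runU Q \<Gamma> V x (Suc k) \<psi> = Uop Q \<Gamma> (V (x ! k) (Suc k)) (Suc k) (runU Q \<Gamma> V x k \<psi>)"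

definition p_acc_mm :: "'s set \<Rightarrow> 's \<Rightarrow> 's set \<Rightarrow> 's set \<Rightarrow> 'g set
     \<Rightarrow> ('a \<Rightarrow> nat \<Rightarrow> ('s \<times> 'g) \<Rightarrow> ('s \<times> 'g) \<Rightarrow> complex)
     \<Rightarrow> 'a list \<Rightarrow> (nat \<Rightarrow> 'g list \<Rightarrow> complex) \<Rightarrow> real" where
  "p_acc_mm Q q0 Qa Qr \<Gamma> V x \<phi> =
     (let n = length x; \<psi>0 = init q0 (\<phi> n) in
      \<Sum>i\<in>{1..n}. sqnorm Q \<Gamma> n
        (proj Qa (Uop Q \<Gamma> (V (x ! (i - 1)) i) i (runT Q (Q - Qa - Qr) \<Gamma> V x (i - 1) \<psi>0))))"

definition p_acc_mo :: "'s set \<Rightarrow> 's \<Rightarrow> 's set \<Rightarrow> 'g set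
     \<Rightarrow> ('a \<Rightarrow> nat \<Rightarrow> ('s \<times> 'g) \<Rightarrow> ('s \<times> 'g) \<Rightarrow> complex)
     \<Rightarrow> 'a list \<Rightarrow> (nat \<Rightarrow> 'g list \<Rightarrow> complex) \<Rightarrow> real" where
  "p_acc_mo Q q0 Qa \<Gamma> V x \<phi> =
     (let n = length x in sqnorm Q \<Gamma> n (proj Qa (runU Q \<Gamma> V x n (init q0 (\<phi> n)))))"

end

theory Submission
  imports Defs
begin

text \<open>Enlarge each state by a flag telling whether the machine has already halted, and each
  advice symbol by a bit telling whether halting happened at that step. Step \<open>i\<close> applies
  \<open>V^(i)\<close> only while the flag is down and then, if the new state is halting and the flag
  equals the \<open>i\<close>-th bit, flips both (flipping rather than setting keeps the step unitary).
  Starting from all-zero bits, the branch that halts at step \<open>i\<close> thus ends with the single bit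
  \<open>i\<close> raised; branches halting at different times are orthogonal, so one final measurement
  accepts with the sum of the measure-many contributions. Renaming states and advice symbols
  injectively into \<open>\<nat>\<close> gives the required types.\<close>

section \<open>Renaming states and advice symbols\<close>

lemma words_image:
  assumes "inj_on g G"
  shows "words (g ` G) n = map g ` words G n"
proof
  show "map g ` words G n \<subseteq> words (g ` G) n"
    by (auto simp: words_def) blast
  show "words (g ` G) n \<subseteq> map g ` words G n"
  proof
    fix y assume "y \<in> words (g ` G) n"
    hence y: "set y \<subseteq> g ` G" "length y = n" by (auto simp: words_def)
    let ?z = "map (the_inv_into G g) y"
    have "map g ?z = y" using y(1) assms
      by (auto simp: f_the_inv_into_f intro!: map_idI)
    moreover have "?z \<in> words G n" using y assms
      by (auto simp: words_def the_inv_into_into)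
    ultimately show "y \<in> map g ` words G n" by (metis image_eqI)
  qed
qed

lemma sum_words_image:
  assumes g: "inj_on g G"
  shows "(\<Sum>y\<in>words (g ` G) n. F y) = (\<Sum>y\<in>words G n. F (map g y))"
proof -
  have "inj_on (map g) (words G n)"
    using g by (intro inj_on_mapI) (auto simp: words_def intro: inj_on_subset)
  thus ?thesis by (simp add: words_image[OF g] sum.reindex)
qed

lemma sum_Times_image:
  assumes "inj_on e Q" "inj_on g G"
  shows "(\<Sum>k\<in>e ` Q \<times> g ` G. F k) = (\<Sum>(q, \<tau>)\<in>Q \<times> G. F (e q, g \<tau>))"
proof -
  have "e ` Q \<times> g ` G = map_prod e g ` (Q \<times> G)" by (simp add: map_prod_surj_on)
  moreover have "inj_on (map_prod e g) (Q \<times> G)" using assms by (rule map_prod_inj_on)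
  ultimately show ?thesis by (simp add: sum.reindex case_prod_beta' comp_def map_prod_def)
qed

definition rename_V :: "('s \<Rightarrow> 't) \<Rightarrow> ('g \<Rightarrow> 'h) \<Rightarrow> 's set \<Rightarrow> 'g set
   \<Rightarrow> ('a \<Rightarrow> nat \<Rightarrow> ('s \<times> 'g) \<Rightarrow> ('s \<times> 'g) \<Rightarrow> complex)
   \<Rightarrow> ('a \<Rightarrow> nat \<Rightarrow> ('t \<times> 'h) \<Rightarrow> ('t \<times> 'h) \<Rightarrow> complex)" where
  "rename_V e g Q G V = (\<lambda>\<sigma> i (q', \<tau>') (q, \<tau>).
     V \<sigma> i (the_inv_into Q e q', the_inv_into G g \<tau>') (the_inv_into Q e q, the_inv_into G g \<tau>))"

definition rename_advice :: "('g \<Rightarrow> 'h) \<Rightarrow> 'g set \<Rightarrow> (nat \<Rightarrow> 'g list \<Rightarrow> complex)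
   \<Rightarrow> nat \<Rightarrow> 'h list \<Rightarrow> complex" where
  "rename_advice g G \<phi> = (\<lambda>n y. \<phi> n (map (the_inv_into G g) y))"

lemma rename_advice_map:
  "inj_on g G \<Longrightarrow> set y \<subseteq> G \<Longrightarrow> rename_advice g G \<phi> n (map g y) = \<phi> n y"
  by (simp add: rename_advice_def map_idI subset_iff the_inv_into_f_f)

lemma is_rqfa_rename:
  assumes rq: "is_rqfa \<Sigma> Q q0 Qa Qr G V" and e: "inj_on e Q" and g: "inj_on g G"
  shows "is_rqfa \<Sigma> (e ` Q) (e q0) (e ` Qa) (e ` Qr) (g ` G) (rename_V e g Q G V)"
proof -
  have sub: "Qa \<subseteq> Q" "Qr \<subseteq> Q" using rq by (auto simp: is_rqfa_def)
  have "e ` Qa \<inter> e ` Qr = e ` (Qa \<inter> Qr)"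
    using inj_on_image_Int[OF e sub] by simp
  hence disj: "e ` Qa \<inter> e ` Qr = {}" using rq by (simp add: is_rqfa_def)
  have "unitary_on (e ` Q \<times> g ` G) (rename_V e g Q G V \<sigma> i)" if "\<sigma> \<in> \<Sigma>" "i \<ge> 1" for \<sigma> i
    unfolding unitary_on_def
  proof (intro ballI)
    fix a b assume "a \<in> e ` Q \<times> g ` G" "b \<in> e ` Q \<times> g ` G"
    then obtain qa ta qb tb where A: "a = (e qa, g ta)" "qa \<in> Q" "ta \<in> G"
      and B: "b = (e qb, g tb)" "qb \<in> Q" "tb \<in> G" by auto
    have "(\<Sum>k\<in>e ` Q \<times> g ` G. cnj (rename_V e g Q G V \<sigma> i k a) * rename_V e g Q G V \<sigma> i k b)
        = (\<Sum>k\<in>Q \<times> G. cnj (V \<sigma> i k (qa, ta)) * V \<sigma> i k (qb, tb))"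
      using e g A B
      by (subst sum_Times_image[OF e g]) (auto simp: rename_V_def the_inv_into_f_f intro!: sum.cong)
    also have "\<dots> = (if (qa, ta) = (qb, tb) then 1 else 0)"
      using rq that A B by (simp add: is_rqfa_def unitary_on_def)
    also have "\<dots> = (if a = b then 1 else 0)"
      using A B e g by (auto dest: inj_onD)
    finally show "(\<Sum>k\<in>e ` Q \<times> g ` G. cnj (rename_V e g Q G V \<sigma> i k a) * rename_V e g Q G V \<sigma> i k b)
        = (if a = b then 1 else 0)" .
  qed
  thus ?thesis using rq sub disj by (auto simp: is_rqfa_def)
qed

lemma is_advice_rename:
  assumes "is_advice G \<phi>" and g: "inj_on g G"
  shows "is_advice (g ` G) (rename_advice g G \<phi>)"
  using assms unfolding is_advice_def
  by (simp add: sum_words_image[OF g]) (simp add: words_def rename_advice_map[OF g])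

lemma runU_rename:
  assumes e: "inj_on e Q" and g: "inj_on g G" and q0: "q0 \<in> Q"
  shows "q \<in> Q \<Longrightarrow> set y \<subseteq> G \<Longrightarrow>
    runU (e ` Q) (g ` G) (rename_V e g Q G V) x k (init (e q0) (rename_advice g G \<phi> n)) (e q, map g y)
    = runU Q G V x k (init q0 (\<phi> n)) (q, y)"
proof (induction k arbitrary: q y)
  case 0
  moreover have "e q = e q0 \<longleftrightarrow> q = q0" using 0 q0 e by (meson inj_on_eq_iff)
  ultimately show ?case by (simp add: init_def rename_advice_map[OF g])
next
  case (Suc k)
  let ?W' = "rename_V e g Q G V (x ! k) (Suc k)"
  let ?\<Psi>' = "runU (e ` Q) (g ` G) (rename_V e g Q G V) x k (init (e q0) (rename_advice g G \<phi> n))"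
  let ?\<Psi> = "runU Q G V x k (init q0 (\<phi> n))"
  show ?case
  proof (cases "Suc k \<le> length y")
    case False thus ?thesis by (simp add: Uop_def)
  next
    case True
    have "runU (e ` Q) (g ` G) (rename_V e g Q G V) x (Suc k)
            (init (e q0) (rename_advice g G \<phi> n)) (e q, map g y)
        = (\<Sum>(q', \<tau>)\<in>Q \<times> G. ?W' (e q, g (y ! k)) (e q', g \<tau>) * ?\<Psi>' (e q', map g (y[k := \<tau>])))"
      using True Suc.prems
      by (simp add: Uop_def image_mono sum_Times_image[OF e g] case_prod_beta' map_update)
    also have "\<dots> = (\<Sum>(q', \<tau>)\<in>Q \<times> G. V (x ! k) (Suc k) (q, y ! k) (q', \<tau>) * ?\<Psi> (q', y[k := \<tau>]))"
    proof (intro sum.cong refl, clarify)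
      fix q' \<tau> assume "q' \<in> Q" "\<tau> \<in> G"
      moreover have "set (y[k := \<tau>]) \<subseteq> G"
        using Suc.prems(2) \<open>\<tau> \<in> G\<close> by (meson insert_subset order_trans set_update_subset_insert)
      moreover have "y ! k \<in> G" using True Suc.prems by auto
      ultimately show "?W' (e q, g (y ! k)) (e q', g \<tau>) * ?\<Psi>' (e q', map g (y[k := \<tau>]))
          = V (x ! k) (Suc k) (q, y ! k) (q', \<tau>) * ?\<Psi> (q', y[k := \<tau>])"
        using Suc e g by (simp add: rename_V_def the_inv_into_f_f)
    qed
    also have "\<dots> = runU Q G V x (Suc k) (init q0 (\<phi> n)) (q, y)"
      using True Suc.prems by (simp add: Uop_def)
    finally show ?thesis .
  qed
qed

lemma p_acc_mo_rename:
  assumes e: "inj_on e Q" and g: "inj_on g G" and q0: "q0 \<in> Q" and Qa: "Qa \<subseteq> Q"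
  shows "p_acc_mo (e ` Q) (e q0) (e ` Qa) (g ` G) (rename_V e g Q G V) x (rename_advice g G \<phi>)
       = p_acc_mo Q q0 Qa G V x \<phi>"
proof -
  have "e q \<in> e ` Qa \<longleftrightarrow> q \<in> Qa" if "q \<in> Q" for q
    using that e Qa by (meson inj_on_image_mem_iff)
  thus ?thesis
    unfolding p_acc_mo_def Let_def sqnorm_def
    by (simp add: sum.reindex[OF e] sum_words_image[OF g] proj_def)
      (intro sum.cong refl, simp add: runU_rename[OF e g q0] words_def)
qed

section \<open>Recording the halting time\<close>

definition halt_swap :: "'s set \<Rightarrow> ('s \<times> bool) \<times> ('g \<times> bool) \<Rightarrow> ('s \<times> bool) \<times> ('g \<times> bool)" where
  "halt_swap H = (\<lambda>((q, f), (\<tau>, b)).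
     if q \<in> H \<and> f = b then ((q, \<not> f), (\<tau>, \<not> b)) else ((q, f), (\<tau>, b)))"

definition freeze :: "('s \<times> 'g \<Rightarrow> 's \<times> 'g \<Rightarrow> complex)
   \<Rightarrow> ('s \<times> bool) \<times> ('g \<times> bool) \<Rightarrow> ('s \<times> bool) \<times> ('g \<times> bool) \<Rightarrow> complex" where
  "freeze W = (\<lambda>((q', f'), (\<tau>', b')) ((q, f), (\<tau>, b)).
     if f' = f \<and> b' = b then (if f then of_bool ((q', \<tau>') = (q, \<tau>)) else W (q', \<tau>') (q, \<tau>)) else 0)"

text \<open>The matrix entry at \<open>(out, in)\<close> is that of the product \<open>halt_swap \<cdot> freeze W\<close>: first \<open>W\<close>
  acts on the unhalted part, then \<open>halt_swap\<close> may flip the halting flag and the current advice bit.\<close>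
definition record_halting :: "'s set \<Rightarrow> ('s \<times> 'g \<Rightarrow> 's \<times> 'g \<Rightarrow> complex)
   \<Rightarrow> ('s \<times> bool) \<times> ('g \<times> bool) \<Rightarrow> ('s \<times> bool) \<times> ('g \<times> bool) \<Rightarrow> complex" where
  "record_halting H W out = freeze W (halt_swap H out)"

definition unmarked_advice :: "(nat \<Rightarrow> 'g list \<Rightarrow> complex) \<Rightarrow> nat \<Rightarrow> ('g \<times> bool) list \<Rightarrow> complex" where
  "unmarked_advice \<phi> = (\<lambda>n y. if map snd y = replicate n False then \<phi> n (map fst y) else 0)"

definition halt_mark :: "nat \<Rightarrow> nat \<Rightarrow> bool list" where
  "halt_mark n i = (replicate n False)[i - 1 := True]"

lemma sum_flagged_slice:
  fixes f0 b0 :: bool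
  assumes "finite Q" "finite G"
    and "\<And>q f \<tau> b. f \<noteq> f0 \<or> b \<noteq> b0 \<Longrightarrow> F ((q, f), (\<tau>, b)) = 0"
  shows "(\<Sum>k\<in>(Q \<times> UNIV) \<times> (G \<times> UNIV). F k) = (\<Sum>k\<in>Q \<times> G. F ((fst k, f0), (snd k, b0)))"
proof -
  let ?h = "\<lambda>k. ((fst k, f0), (snd k, b0))"
  have "(\<Sum>k\<in>(Q \<times> UNIV) \<times> (G \<times> UNIV). F k) = (\<Sum>k\<in>?h ` (Q \<times> G). F k)"
  proof (rule sum.mono_neutral_right)
    show "\<forall>k\<in>(Q \<times> UNIV) \<times> (G \<times> UNIV) - ?h ` (Q \<times> G). F k = 0"
      using assms(3) by (force simp: image_iff)
  qed (use assms in auto)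
  also have "\<dots> = (\<Sum>k\<in>Q \<times> G. F (?h k))"
    by (rule sum.reindex_cong[OF _ refl refl]) (auto simp: inj_on_def prod_eq_iff)
  finally show ?thesis .
qed

lemma sum_freeze:
  assumes "finite Q" "finite G"
  shows "(\<Sum>k\<in>(Q \<times> UNIV) \<times> (G \<times> UNIV). freeze W ((q', f), (\<tau>', b)) k * F k) =
    (if f then (if q' \<in> Q \<and> \<tau>' \<in> G then F ((q', True), (\<tau>', b)) else 0)
     else (\<Sum>(q, \<tau>)\<in>Q \<times> G. W (q', \<tau>') (q, \<tau>) * F ((q, False), (\<tau>, b))))"
proof -
  have "(\<Sum>k\<in>(Q \<times> UNIV) \<times> (G \<times> UNIV). freeze W ((q', f), (\<tau>', b)) k * F k) =
        (\<Sum>k\<in>Q \<times> G. freeze W ((q', f), (\<tau>', b)) ((fst k, f), (snd k, b)) * F ((fst k, f), (snd k, b)))"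
    using assms by (rule sum_flagged_slice) (auto simp: freeze_def)
  thus ?thesis
    using assms by (simp add: freeze_def case_prod_beta' sum.delta)
qed

lemma unitary_on_freeze:
  assumes fin: "finite Q" "finite G" and W: "unitary_on (Q \<times> G) W"
  shows "unitary_on ((Q \<times> UNIV) \<times> (G \<times> UNIV)) (freeze W)"
  unfolding unitary_on_def
proof (intro ballI)
  fix a b assume "a \<in> (Q \<times> (UNIV :: bool set)) \<times> (G \<times> (UNIV :: bool set))"
    and "b \<in> (Q \<times> (UNIV :: bool set)) \<times> (G \<times> (UNIV :: bool set))"
  then obtain qa fa ta ba qb fb tb bb
    where A: "a = ((qa, fa), (ta, ba))" "qa \<in> Q" "ta \<in> G"
      and B: "b = ((qb, fb), (tb, bb))" "qb \<in> Q" "tb \<in> G" by auto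
  have "(\<Sum>k\<in>(Q \<times> UNIV) \<times> (G \<times> UNIV). cnj (freeze W k a) * freeze W k b)
      = (\<Sum>k\<in>Q \<times> G. cnj (freeze W ((fst k, fa), (snd k, ba)) a) * freeze W ((fst k, fa), (snd k, ba)) b)"
    using fin by (rule sum_flagged_slice) (auto simp: freeze_def A)
  also have "\<dots> = (if a = b then 1 else 0)"
  proof (cases "fa = fb \<and> ba = bb")
    case False
    thus ?thesis by (auto simp: freeze_def A B intro!: sum.neutral)
  next
    case same: True
    show ?thesis
    proof (cases fa)
      case True
      have "(\<Sum>k\<in>Q \<times> G. cnj (freeze W ((fst k, fa), (snd k, ba)) a) * freeze W ((fst k, fa), (snd k, ba)) b)
          = (\<Sum>k\<in>Q \<times> G. if k = (qa, ta) then of_bool ((qa, ta) = (qb, tb)) else 0)"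
        using True same A B by (intro sum.cong) (auto simp: freeze_def)
      thus ?thesis using fin A B same by (simp add: sum.delta')
    next
      case False
      thus ?thesis using same W A B
        by (auto simp: freeze_def unitary_on_def case_prod_beta')
    qed
  qed
  finally show "(\<Sum>k\<in>(Q \<times> UNIV) \<times> (G \<times> UNIV). cnj (freeze W k a) * freeze W k b)
      = (if a = b then 1 else 0)" .
qed

lemma halt_swap_involution: "halt_swap H (halt_swap H k) = k"
  by (cases k) (auto simp: halt_swap_def)

lemma unitary_on_record_halting:
  assumes "finite Q" "finite G" and "unitary_on (Q \<times> G) W"
  shows "unitary_on ((Q \<times> UNIV) \<times> (G \<times> UNIV)) (record_halting H W)"
proof -
  have "bij_betw (halt_swap H) ((Q \<times> UNIV) \<times> (G \<times> UNIV)) ((Q \<times> UNIV) \<times> (G \<times> UNIV))"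
    by (rule bij_betw_byWitness[where f' = "halt_swap H"])
      (auto simp: halt_swap_involution halt_swap_def split: if_splits)
  thus ?thesis
    using unitary_on_freeze[OF assms] unfolding unitary_on_def record_halting_def
    by (simp add: sum.reindex_bij_betw[of "halt_swap H", where g = "\<lambda>k. cnj (freeze W k _) * freeze W k _"])
qed

lemma is_rqfa_record_halting:
  assumes "is_rqfa \<Sigma> Q q0 Qa Qr G V"
  shows "is_rqfa \<Sigma> (Q \<times> UNIV) (q0, False) (Qa \<times> {True}) (Qr \<times> {True}) (G \<times> UNIV)
           (\<lambda>\<sigma> i. record_halting (Qa \<union> Qr) (V \<sigma> i))"
  using assms unitary_on_record_halting[of Q G] by (auto simp: is_rqfa_def)

lemma finite_words: "finite G \<Longrightarrow> finite (words G n)"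
  unfolding words_def by (rule finite_lists_length_eq)

lemma sum_words_marked:
  fixes c :: "bool list"
  assumes fin: "finite G" and c: "length c = n"
  shows "(\<Sum>y\<in>words (G \<times> UNIV) n. if map snd y = c then h (map fst y) else 0) = (\<Sum>z\<in>words G n. h z)"
proof -
  have "bij_betw (\<lambda>z. zip z c) (words G n) {y \<in> words (G \<times> UNIV) n. map snd y = c}"
  proof (rule bij_betw_byWitness[where f' = "map fst"])
    show "\<forall>z\<in>words G n. map fst (zip z c) = z"
      using c by (simp add: words_def)
    show "\<forall>y\<in>{y \<in> words (G \<times> UNIV) n. map snd y = c}. zip (map fst y) c = y"
      by (metis (mono_tags, lifting) mem_Collect_eq zip_map_fst_snd)
    show "(\<lambda>z. zip z c) ` words G n \<subseteq> {y \<in> words (G \<times> UNIV) n. map snd y = c}"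
      using c by (auto simp: words_def dest: set_zip_leftD)
    show "map fst ` {y \<in> words (G \<times> UNIV) n. map snd y = c} \<subseteq> words G n"
      by (fastforce simp: words_def subset_iff)
  qed
  hence "(\<Sum>y\<in>{y \<in> words (G \<times> UNIV) n. map snd y = c}. h (map fst y)) = (\<Sum>z\<in>words G n. h z)"
    using c by (subst sum.reindex_bij_betw[symmetric]) (auto simp: words_def intro!: sum.cong)
  thus ?thesis
    using fin by (simp add: sum.inter_filter[symmetric] finite_words)
qed

lemma is_advice_unmarked:
  assumes "finite G" and "is_advice G \<phi>"
  shows "is_advice (G \<times> UNIV) (unmarked_advice \<phi>)"
  unfolding is_advice_def
proof (intro allI impI)
  fix n :: nat assume "1 \<le> n"
  have "(\<Sum>y\<in>words (G \<times> UNIV) n. (cmod (unmarked_advice \<phi> n y))\<^sup>2)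
      = (\<Sum>y\<in>words (G \<times> UNIV) n. if map snd y = replicate n False then (cmod (\<phi> n (map fst y)))\<^sup>2 else 0)"
    by (intro sum.cong) (simp_all add: unmarked_advice_def)
  also have "\<dots> = (\<Sum>z\<in>words G n. (cmod (\<phi> n z))\<^sup>2)"
    using assms(1) by (rule sum_words_marked) simp
  also have "\<dots> = 1"
    using assms(2) \<open>1 \<le> n\<close> by (simp add: is_advice_def)
  finally show "(\<Sum>y\<in>words (G \<times> UNIV) n. (cmod (unmarked_advice \<phi> n y))\<^sup>2) = 1" .
qed

lemma Uop_record_halting:
  assumes fin: "finite Q" "finite G" and q: "q \<in> Q" and y: "set y \<subseteq> G \<times> UNIV"
    and i: "1 \<le> i" "i \<le> length y" and yi: "y ! (i - 1) = (t, b)"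
  shows "Uop (Q \<times> UNIV) (G \<times> UNIV) (record_halting H W) i \<Psi> ((q, f), y) =
    (if q \<in> H \<and> f = b then
       if f then (\<Sum>(q', \<tau>)\<in>Q \<times> G. W (q, t) (q', \<tau>) * \<Psi> ((q', False), y[i - 1 := (\<tau>, False)]))
       else \<Psi> ((q, True), y[i - 1 := (t, True)])
     else if f then \<Psi> ((q, True), y)
     else (\<Sum>(q', \<tau>)\<in>Q \<times> G. W (q, t) (q', \<tau>) * \<Psi> ((q', False), y[i - 1 := (\<tau>, b)])))"
proof -
  have "(t, b) \<in> set y" using i yi by (metis One_nat_def Suc_le_eq Suc_pred nth_mem)
  hence "t \<in> G" using y by auto
  have "Uop (Q \<times> UNIV) (G \<times> UNIV) (record_halting H W) i \<Psi> ((q, f), y)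
      = (\<Sum>k\<in>(Q \<times> UNIV) \<times> (G \<times> UNIV). freeze W (halt_swap H ((q, f), (t, b))) k * \<Psi> (fst k, y[i - 1 := snd k]))"
    using q y i yi unfolding Uop_def record_halting_def by (simp add: split_def)
  also have "\<dots> = (if q \<in> H \<and> f = b then
       if f then (\<Sum>(q', \<tau>)\<in>Q \<times> G. W (q, t) (q', \<tau>) * \<Psi> ((q', False), y[i - 1 := (\<tau>, False)]))
       else \<Psi> ((q, True), y[i - 1 := (t, True)])
     else if f then \<Psi> ((q, True), y[i - 1 := (t, b)])
     else (\<Sum>(q', \<tau>)\<in>Q \<times> G. W (q, t) (q', \<tau>) * \<Psi> ((q', False), y[i - 1 := (\<tau>, b)])))"
    using q \<open>t \<in> G\<close> by (simp add: halt_swap_def sum_freeze[OF fin])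
  also have "y[i - 1 := (t, b)] = y"
    using yi by (metis list_update_id)
  finally show ?thesis .
qed

text \<open>\<open>halt_amp \<dots> \<psi> i\<close> is \<open>U^(i)_{x_i} T^(i-1)_{x_{i-1}} \<cdots> T^(1)_{x_1} \<psi>\<close>, the state whose
  \<open>P_acc\<close>-part contributes the \<open>i\<close>-th summand of the measure-many acceptance probability.\<close>
definition halt_amp :: "'s set \<Rightarrow> 's set \<Rightarrow> 'g set \<Rightarrow> ('a \<Rightarrow> nat \<Rightarrow> ('s \<times> 'g) \<Rightarrow> ('s \<times> 'g) \<Rightarrow> complex)
   \<Rightarrow> 'a list \<Rightarrow> ('s \<times> 'g list \<Rightarrow> complex) \<Rightarrow> nat \<Rightarrow> ('s \<times> 'g list \<Rightarrow> complex)" where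
  "halt_amp Q Qn G V x \<psi> i = Uop Q G (V (x ! (i - 1)) i) i (runT Q Qn G V x (i - 1) \<psi>)"

lemma nth_halt_mark: "k < n \<Longrightarrow> halt_mark n i ! k \<longleftrightarrow> k = i - 1"
  by (cases "i - 1 < n") (auto simp: halt_mark_def nth_list_update)

lemma eq_halt_mark_Suc_iff:
  assumes "length bs = n" "k < n" "bs ! k"
  shows "bs = halt_mark n (Suc k) \<longleftrightarrow> bs[k := False] = replicate n False"
proof
  assume "bs[k := False] = replicate n False"
  hence "bs = (replicate n False)[k := bs ! k]" by (metis list_update_id list_update_overwrite)
  thus "bs = halt_mark n (Suc k)" using assms(3) by (simp add: halt_mark_def)
qed (use assms(2) in \<open>simp add: halt_mark_def, metis list_update_id nth_replicate\<close>)

lemma sum_halt_mark_before: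
  "k < n \<Longrightarrow> bs ! k \<Longrightarrow> (\<Sum>i\<in>{1..k}. if bs = halt_mark n i then a i else 0) = 0"
  by (intro sum.neutral) (auto simp: nth_halt_mark)

text \<open>The simulator's state after \<open>k\<close> steps, given the unhalted amplitude \<open>R\<close> of \<open>M\<close> and the
  amplitudes \<open>A i\<close> of its branches halting at step \<open>i\<close>.\<close>
definition marked_state :: "'s set \<Rightarrow> nat \<Rightarrow> ('s \<times> 'g list \<Rightarrow> complex) \<Rightarrow> (nat \<Rightarrow> 's \<times> 'g list \<Rightarrow> complex)
   \<Rightarrow> nat \<Rightarrow> ('s \<times> bool) \<times> ('g \<times> bool) list \<Rightarrow> complex" where
  "marked_state H n R A k = (\<lambda>((q, f), y).
     if f then
       if q \<in> H then (\<Sum>i\<in>{1..k}. if map snd y = halt_mark n i then A i (q, map fst y) else 0) else 0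
     else if map snd y = replicate n False then R (q, map fst y) else 0)"

lemma sum_marked_state_unhalted:
  assumes q: "q \<in> Q" and y: "set y \<subseteq> G \<times> UNIV" "length y = n" and k: "k < n" and yk: "y ! k = (t, b)"
  shows "(\<Sum>(q', \<tau>)\<in>Q \<times> G. W (q, t) (q', \<tau>) * marked_state H n R A k ((q', False), y[k := (\<tau>, c)]))
    = (if (map snd y)[k := c] = replicate n False then Uop Q G W (Suc k) R (q, map fst y) else 0)"
proof -
  have "Uop Q G W (Suc k) R (q, map fst y)
      = (\<Sum>(q', \<tau>)\<in>Q \<times> G. W (q, t) (q', \<tau>) * R (q', (map fst y)[k := \<tau>]))"
    using q y k yk by (auto simp: Uop_def)
  thus ?thesis
    by (auto simp: marked_state_def map_update intro!: sum.neutral)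
qed

lemma Uop_record_halting_marked_state:
  assumes fin: "finite Q" "finite G" and k: "k < n"
    and q: "q \<in> Q" and y: "set y \<subseteq> G \<times> UNIV" "length y = n"
    and \<Psi>: "\<And>q' f' y'. q' \<in> Q \<Longrightarrow> set y' \<subseteq> G \<times> UNIV \<Longrightarrow> length y' = n \<Longrightarrow>
      \<Psi> ((q', f'), y') = marked_state H n R A k ((q', f'), y')"
    and A: "A (Suc k) = Uop Q G W (Suc k) R"
  shows "Uop (Q \<times> UNIV) (G \<times> UNIV) (record_halting H W) (Suc k) \<Psi> ((q, f), y)
    = marked_state H n (proj (Q - H) (A (Suc k))) A (Suc k) ((q, f), y)"
proof -
  let ?M = "marked_state H n R A k"
  let ?bs = "map snd y"
  obtain t b where yk: "y ! k = (t, b)" by fastforce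
  have "(t, b) \<in> set y" using yk k y by (metis nth_mem)
  hence t: "t \<in> G" using y by auto
  have bs: "?bs ! k = b" using yk k y by simp
  have upd: "set (y[k := (\<tau>, c)]) \<subseteq> G \<times> UNIV" if "\<tau> \<in> G" for \<tau> c
    using y that by (meson UNIV_I insert_subset mem_Sigma_iff order_trans set_update_subset_insert)
  have "Uop (Q \<times> UNIV) (G \<times> UNIV) (record_halting H W) (Suc k) \<Psi> ((q, f), y) =
    (if q \<in> H \<and> f = b then
       if f then (\<Sum>(q', \<tau>)\<in>Q \<times> G. W (q, t) (q', \<tau>) * ?M ((q', False), y[k := (\<tau>, False)]))
       else ?M ((q, True), y[k := (t, True)])
     else if f then ?M ((q, True), y)
     else (\<Sum>(q', \<tau>)\<in>Q \<times> G. W (q, t) (q', \<tau>) * ?M ((q', False), y[k := (\<tau>, b)])))"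
  proof -
    have \<Psi>_upd: "\<Psi> ((q', f'), y[k := (\<tau>, c)]) = ?M ((q', f'), y[k := (\<tau>, c)])"
      if "q' \<in> Q" "\<tau> \<in> G" for q' f' \<tau> c
      using \<Psi> that upd y by simp
    have "(\<Sum>(q', \<tau>)\<in>Q \<times> G. W (q, t) (q', \<tau>) * \<Psi> ((q', False), y[k := (\<tau>, c)]))
        = (\<Sum>(q', \<tau>)\<in>Q \<times> G. W (q, t) (q', \<tau>) * ?M ((q', False), y[k := (\<tau>, c)]))" for c
      by (intro sum.cong refl) (auto simp: \<Psi>_upd)
    thus ?thesis
      using Uop_record_halting[OF fin q y(1), of "Suc k" t b H W \<Psi> f] k y yk t q
      by (simp add: \<Psi> \<Psi>_upd)
  qed
  also have "\<dots> = marked_state H n (proj (Q - H) (A (Suc k))) A (Suc k) ((q, f), y)"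
  proof (cases f)
    case True
    \<comment> \<open>A branch halted after step \<open>k + 1\<close> either halted earlier, and then mark \<open>k\<close> is unset,
      or halts now and comes from the unhalted branch, with mark \<open>k\<close> just raised.\<close>
    have "?bs = halt_mark n (Suc k) \<longleftrightarrow> ?bs[k := False] = replicate n False" if b
      using eq_halt_mark_Suc_iff[of ?bs n k] y k bs that by simp
    moreover have "?bs \<noteq> halt_mark n (Suc k)" if "\<not> b"
      using bs k nth_halt_mark[of k n "Suc k"] that by auto
    moreover have "?bs[k := b] = ?bs" using bs list_update_id[of ?bs k] by simp
    ultimately show ?thesis
      unfolding sum_marked_state_unhalted[OF q y k yk]
      using True sum_halt_mark_before[OF k, of ?bs] bs A
      by (auto simp: marked_state_def sum.cl_ivl_Suc map_update)
  next
    case False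
    have "?bs \<noteq> replicate n False" if b using bs k y that by (metis nth_replicate)
    moreover have "?bs[k := b] = ?bs" using bs list_update_id[of ?bs k] by simp
    ultimately show ?thesis
      unfolding sum_marked_state_unhalted[OF q y k yk]
      using False sum_halt_mark_before[OF k, of "?bs[k := True]"] q y k A
      by (auto simp: marked_state_def proj_def map_update)
  qed
  finally show ?thesis .
qed

lemma runU_record_halting:
  assumes fin: "finite Q" "finite G"
  shows "k \<le> n \<Longrightarrow> q \<in> Q \<Longrightarrow> set y \<subseteq> G \<times> UNIV \<Longrightarrow> length y = n \<Longrightarrow>
    runU (Q \<times> UNIV) (G \<times> UNIV) (\<lambda>\<sigma> i. record_halting H (V \<sigma> i)) x k
      (init (q0, False) (unmarked_advice \<phi> n)) ((q, f), y) =
    marked_state H n (runT Q (Q - H) G V x k (init q0 (\<phi> n)))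
      (halt_amp Q (Q - H) G V x (init q0 (\<phi> n))) k ((q, f), y)"
proof (induction k arbitrary: q f y)
  case 0
  thus ?case by (auto simp: init_def unmarked_advice_def marked_state_def)
next
  case (Suc k)
  have "runT Q (Q - H) G V x (Suc k) (init q0 (\<phi> n))
      = proj (Q - H) (halt_amp Q (Q - H) G V x (init q0 (\<phi> n)) (Suc k))"
    by (simp add: halt_amp_def)
  thus ?case
    using Uop_record_halting_marked_state[OF fin _ Suc.prems(2-4)] Suc
    by (simp add: halt_amp_def)
qed

section \<open>The acceptance probability\<close>

lemma sum_if_unique:
  assumes "h 0 = 0" and "\<And>i j. i \<in> I \<Longrightarrow> j \<in> I \<Longrightarrow> P i \<Longrightarrow> P j \<Longrightarrow> i = j"
  shows "h (\<Sum>i\<in>I. if P i then a i else 0) = (\<Sum>i\<in>I. if P i then h (a i) else 0)"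
proof (cases "finite I \<and> (\<exists>i\<in>I. P i)")
  case True
  then obtain i0 where "i0 \<in> I" "P i0" by blast
  hence "P i \<longleftrightarrow> i = i0" if "i \<in> I" for i using assms(2) that by blast
  thus ?thesis using True \<open>i0 \<in> I\<close> by (simp add: sum.delta' cong: if_cong)
next
  case False
  thus ?thesis using assms(1) by (auto intro: sum.neutral)
qed

lemma inj_on_halt_mark: "inj_on (halt_mark n) {1..n}"
proof (rule inj_onI)
  fix i j assume ij: "i \<in> {1..n}" "j \<in> {1..n}" and "halt_mark n i = halt_mark n j"
  moreover have "i - 1 < n" using ij by auto
  ultimately have "halt_mark n j ! (i - 1)" using nth_halt_mark[of "i - 1" n i] by auto
  hence "i - 1 = j - 1" using \<open>i - 1 < n\<close> nth_halt_mark[of "i - 1" n j] by auto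
  thus "i = j" using ij by auto
qed

lemma sum_words_marked_sq:
  assumes "finite G"
  shows "(\<Sum>y\<in>words (G \<times> UNIV) n.
      (cmod (\<Sum>i\<in>{1..n}. if map snd y = halt_mark n i then a i (map fst y) else 0))\<^sup>2)
    = (\<Sum>i\<in>{1..n}. \<Sum>z\<in>words G n. (cmod (a i z))\<^sup>2)"
proof -
  have "(\<Sum>y\<in>words (G \<times> UNIV) n.
      (cmod (\<Sum>i\<in>{1..n}. if map snd y = halt_mark n i then a i (map fst y) else 0))\<^sup>2)
    = (\<Sum>y\<in>words (G \<times> UNIV) n. \<Sum>i\<in>{1..n}.
        if map snd y = halt_mark n i then (cmod (a i (map fst y)))\<^sup>2 else 0)"
    using inj_on_halt_mark[of n]
    by (intro sum.cong refl sum_if_unique[where h = "\<lambda>c. (cmod c)\<^sup>2"]) (auto dest: inj_onD)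
  also have "\<dots> = (\<Sum>i\<in>{1..n}. \<Sum>z\<in>words G n. (cmod (a i z))\<^sup>2)"
    using assms by (subst sum.swap) (intro sum.cong refl sum_words_marked, simp_all add: halt_mark_def)
  finally show ?thesis .
qed

lemma sqnorm_proj:
  assumes "finite Q" "S \<subseteq> Q"
  shows "sqnorm Q G n (proj S \<psi>) = (\<Sum>q\<in>S. \<Sum>y\<in>words G n. (cmod (\<psi> (q, y)))\<^sup>2)"
  unfolding sqnorm_def using assms
  by (subst sum.mono_neutral_right[where S = S]) (auto simp: proj_def intro!: sum.cong)

lemma p_acc_mo_record_halting:
  assumes rq: "is_rqfa \<Sigma> Q q0 Qa Qr G V"
  shows "p_acc_mo (Q \<times> UNIV) (q0, False) (Qa \<times> {True}) (G \<times> UNIV)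
      (\<lambda>\<sigma> i. record_halting (Qa \<union> Qr) (V \<sigma> i)) x (unmarked_advice \<phi>)
    = p_acc_mm Q q0 Qa Qr G V x \<phi>"
proof -
  define n where "n = length x"
  let ?\<Psi> = "runU (Q \<times> UNIV) (G \<times> UNIV) (\<lambda>\<sigma> i. record_halting (Qa \<union> Qr) (V \<sigma> i)) x n
    (init (q0, False) (unmarked_advice \<phi> n))"
  let ?A = "halt_amp Q (Q - (Qa \<union> Qr)) G V x (init q0 (\<phi> n))"
  have fin: "finite Q" "finite G" and Qa: "Qa \<subseteq> Q" using rq by (auto simp: is_rqfa_def)
  have "p_acc_mo (Q \<times> UNIV) (q0, False) (Qa \<times> {True}) (G \<times> UNIV)
      (\<lambda>\<sigma> i. record_halting (Qa \<union> Qr) (V \<sigma> i)) x (unmarked_advice \<phi>)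
    = (\<Sum>q\<in>Qa. \<Sum>y\<in>words (G \<times> UNIV) n. (cmod (?\<Psi> ((q, True), y)))\<^sup>2)"
  proof -
    have "Qa \<times> {True} \<subseteq> Q \<times> UNIV" using Qa by auto
    thus ?thesis using fin
      by (simp add: p_acc_mo_def Let_def n_def sqnorm_proj sum.cartesian_product')
  qed
  also have "\<dots> = (\<Sum>q\<in>Qa. \<Sum>y\<in>words (G \<times> UNIV) n.
      (cmod (\<Sum>i\<in>{1..n}. if map snd y = halt_mark n i then ?A i (q, map fst y) else 0))\<^sup>2)"
  proof (intro sum.cong refl)
    fix q y assume "q \<in> Qa" and "y \<in> words (G \<times> (UNIV :: bool set)) n"
    hence y: "q \<in> Q" "set y \<subseteq> G \<times> UNIV" "length y = n" using Qa by (auto simp: words_def)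
    show "(cmod (?\<Psi> ((q, True), y)))\<^sup>2 = (cmod (\<Sum>i\<in>{1..n}.
        if map snd y = halt_mark n i then ?A i (q, map fst y) else 0))\<^sup>2"
      unfolding runU_record_halting[OF fin order_refl y] using \<open>q \<in> Qa\<close> by (simp add: marked_state_def)
  qed
  also have "\<dots> = (\<Sum>q\<in>Qa. \<Sum>i\<in>{1..n}. \<Sum>z\<in>words G n. (cmod (?A i (q, z)))\<^sup>2)"
    using sum_words_marked_sq[OF fin(2), of n "\<lambda>i z. ?A i (_, z)"] by simp
  also have "\<dots> = p_acc_mm Q q0 Qa Qr G V x \<phi>"
  proof -
    have "Q - (Qa \<union> Qr) = Q - Qa - Qr" by blast
    thus ?thesis using fin Qa
      by (subst sum.swap) (simp add: p_acc_mm_def Let_def n_def sqnorm_proj halt_amp_def)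
  qed
  finally show ?thesis .
qed

theorem lemma5p7:
  fixes \<Sigma> :: "'a set" and Q :: "'s set" and q0 :: 's and Qa Qr :: "'s set"
    and \<Gamma> :: "'g set" and V :: "'a \<Rightarrow> nat \<Rightarrow> ('s \<times> 'g) \<Rightarrow> ('s \<times> 'g) \<Rightarrow> complex"
    and \<phi> :: "nat \<Rightarrow> 'g list \<Rightarrow> complex"
  assumes "is_rqfa \<Sigma> Q q0 Qa Qr \<Gamma> V"
    and "is_advice \<Gamma> \<phi>"
  shows "\<exists>(Q' :: nat set) q0' Qa' Qr' (\<Gamma>' :: nat set)
            (V' :: 'a \<Rightarrow> nat \<Rightarrow> (nat \<times> nat) \<Rightarrow> (nat \<times> nat) \<Rightarrow> complex)
            (\<phi>' :: nat \<Rightarrow> nat list \<Rightarrow> complex).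
           is_rqfa \<Sigma> Q' q0' Qa' Qr' \<Gamma>' V' \<and> is_advice \<Gamma>' \<phi>' \<and>
           (\<forall>x. set x \<subseteq> \<Sigma> \<and> x \<noteq> [] \<longrightarrow>
              p_acc_mo Q' q0' Qa' \<Gamma>' V' x \<phi>' = p_acc_mm Q q0 Qa Qr \<Gamma> V x \<phi>)"
proof -
  have fin: "finite Q" "finite \<Gamma>" and "q0 \<in> Q" "Qa \<subseteq> Q"
    using assms(1) by (auto simp: is_rqfa_def)
  obtain e :: "'s \<times> bool \<Rightarrow> nat" where e: "inj_on e (Q \<times> UNIV)"
    using finite_imp_inj_to_nat_seg[of "Q \<times> (UNIV :: bool set)"] fin by auto
  obtain g :: "'g \<times> bool \<Rightarrow> nat" where g: "inj_on g (\<Gamma> \<times> UNIV)"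
    using finite_imp_inj_to_nat_seg[of "\<Gamma> \<times> (UNIV :: bool set)"] fin by auto
  have q0_Qa: "(q0, False) \<in> Q \<times> UNIV" "Qa \<times> {True} \<subseteq> Q \<times> UNIV"
    using \<open>q0 \<in> Q\<close> \<open>Qa \<subseteq> Q\<close> by auto
  let ?V = "\<lambda>\<sigma> i. record_halting (Qa \<union> Qr) (V \<sigma> i)"
  let ?V' = "rename_V e g (Q \<times> UNIV) (\<Gamma> \<times> UNIV) ?V"
  let ?\<phi>' = "rename_advice g (\<Gamma> \<times> UNIV) (unmarked_advice \<phi>)"
  have "is_rqfa \<Sigma> (e ` (Q \<times> UNIV)) (e (q0, False)) (e ` (Qa \<times> {True})) (e ` (Qr \<times> {True}))
      (g ` (\<Gamma> \<times> UNIV)) ?V'"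
    using is_rqfa_rename[OF is_rqfa_record_halting[OF assms(1)] e g] .
  moreover have "is_advice (g ` (\<Gamma> \<times> UNIV)) ?\<phi>'"
    using is_advice_rename[OF is_advice_unmarked[OF fin(2) assms(2)] g] .
  moreover have "p_acc_mo (e ` (Q \<times> UNIV)) (e (q0, False)) (e ` (Qa \<times> {True})) (g ` (\<Gamma> \<times> UNIV)) ?V' x ?\<phi>'
      = p_acc_mm Q q0 Qa Qr \<Gamma> V x \<phi>" for x
    by (simp only: p_acc_mo_rename[OF e g q0_Qa] p_acc_mo_record_halting[OF assms(1)])
  ultimately show ?thesis by blast
qed

end
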